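(* Let $\mathbf{x}$ be an input, $\bar{\mathcal{V}}$ a finite token set, $p_\theta(\cdot\mid\mathbf{x})$ a score on hypotheses, and $k\ge 1$. Run one iteration $t$ of Lookbehind Heuristic Beam Search on a set $Y_{t-1}$ of $k$ hypotheses, producing $\mathbf{y}_t^1,\dots,\mathbf{y}_t^k$. Then for every $i\in\{1,\dots,k\}$, writing $\mathbf{y}_t^i=\mathbf{y}'\circ y$ with $\mathbf{y}'\in Y_{t-1}$ and $y\in\bar{\mathcal{V}}$: (1) the parent $\mathbf{y}'$ is among the top-$i$ scoring hypotheses of $Y_{t-1}$, i.e. $\mathbf{y}'=\mathbf{y}_{t-1}^j$ for some $j\le i$, where $\mathbf{y}_{t-1}^1,\dots,\mathbf{y}_{t-1}^k$ is $Y_{t-1}$ sorted in descending order of $p_\theta(\cdot\mid\mathbf{x})$; (2) $\mathbf{y}_t^i$ has one of the top-$i$ highest scores among all children of the top-$i$ parents, i.e. among $C_i=\{\mathbf{y}_{t-1}^j\circ y : j\le i,\ y\in\bar{\mathcal{V}}\}$ at most $i-1$ elements have score $\log p_\theta(\cdot\mid\mathbf{x})$ strictly greater than that of $\mathbf{y}_t^i$.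
   Context: One iteration of Lookbehind Heuristic Beam Search (LHBS), given $Y_{t-1}$: sort $Y_{t-1}$ as $\mathbf{y}_{t-1}^1,\dots,\mathbf{y}_{t-1}^k$ in descending order of $p_\theta(\mathbf{y}_{t-1}^i\mid\mathbf{x})$; set $\mathcal{B}'_{t,0}=\emptyset$; for $i=1,\dots,k$: set $\mathcal{B}_{t,i}=\mathcal{B}'_{t,i-1}\cup\{\mathbf{y}_{t-1}^i\circ y: y\in\bar{\mathcal{V}}\}$, $\mathbf{y}_t^i=\arg\max_{\mathbf{y}\in\mathcal{B}_{t,i}}\log p_\theta(\mathbf{y}\mid\mathbf{x})$, and $\mathcal{B}'_{t,i}=\mathcal{B}_{t,i}\setminus\{\mathbf{y}_t^i\}$; return $Y_t=\{\mathbf{y}_t^1,\dots,\mathbf{y}_t^k\}$. Here $\circ$ denotes concatenation. *)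

theory Defs
  imports Complex_Main
begin

(* Hypotheses are token lists; concatenation y' \<circ> y is  y' @ [y]. *)
definition children :: "'a set \<Rightarrow> 'a list \<Rightarrow> 'a list set" where
  "children V y' = {y' @ [y] | y. y \<in> V}"

(* B'_{t,i} (0-indexed: lhbs_Bprime V ys zs i = B'_{t,i}) for sorted parents ys and chosen outputs zs *)
fun lhbs_Bprime :: "'a set \<Rightarrow> 'a list list \<Rightarrow> 'a list list \<Rightarrow> nat \<Rightarrow> 'a list set" where
  "lhbs_Bprime V ys zs 0 = {}"
| "lhbs_Bprime V ys zs (Suc i) =
     (lhbs_Bprime V ys zs i \<union> children V (ys ! i)) - {zs ! i}"

(* B_{t,i+1} = B'_{t,i} \<union> children of the (i+1)-th parent *)
definition lhbs_B :: "'a set \<Rightarrow> 'a list list \<Rightarrow> 'a list list \<Rightarrow> nat \<Rightarrow> 'a list set" where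
  "lhbs_B V ys zs i = lhbs_Bprime V ys zs i \<union> children V (ys ! i)"

(* zs is a possible output of one LHBS iteration on the (already sorted) parent list ys:
   each zs!i is an argmax of log p over B_{t,i+1} (ties broken arbitrarily). *)
definition lhbs_step :: "'a set \<Rightarrow> ('a list \<Rightarrow> real) \<Rightarrow> 'a list list \<Rightarrow> 'a list list \<Rightarrow> bool" where
  "lhbs_step V p ys zs \<longleftrightarrow> length zs = length ys \<and>
     (\<forall>i < length ys. zs ! i \<in> lhbs_B V ys zs i \<and>
        (\<forall>y \<in> lhbs_B V ys zs i. ln (p y) \<le> ln (p (zs ! i))))"

end

theory Submission
  imports Defs
begin

(* The candidate pool B_{t,i} only ever contains children of the first i parents, and a child of
   one of them is missing from it only if it was already selected as an earlier output. Hence the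
   output y_t^i is a child of a top-i parent, and every child of a top-i parent that scores strictly
   better than y_t^i is one of the i - 1 earlier outputs. *)

lemma lhbs_Bprime_subset_children:
  "lhbs_Bprime V ys zs i \<subseteq> (\<Union>j<i. children V (ys ! j))"
  by (induction i) auto

lemma children_subset_lhbs_Bprime:
  "(\<Union>j<i. children V (ys ! j)) \<subseteq> lhbs_Bprime V ys zs i \<union> (!) zs ` {..<i}"
proof (induction i)
  case 0
  show ?case by simp
next
  case (Suc i)
  have "(\<Union>j<Suc i. children V (ys ! j)) = (\<Union>j<i. children V (ys ! j)) \<union> children V (ys ! i)"
    by (simp add: lessThan_Suc Un_commute)
  also have "\<dots> \<subseteq> lhbs_Bprime V ys zs i \<union> children V (ys ! i) \<union> (!) zs ` {..<i}"
    using Suc.IH by blast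
  also have "\<dots> \<subseteq> lhbs_Bprime V ys zs (Suc i) \<union> (!) zs ` {..<Suc i}"
    by auto
  finally show ?case .
qed

lemma children_atMost_eq:
  "(\<Union>j\<le>i. children V (ys ! j)) = (\<Union>j<i. children V (ys ! j)) \<union> children V (ys ! i)"
  by (simp add: lessThan_Suc_atMost[symmetric] lessThan_Suc Un_commute)

lemma lhbs_B_subset_children:
  "lhbs_B V ys zs i \<subseteq> (\<Union>j\<le>i. children V (ys ! j))"
  using lhbs_Bprime_subset_children[of V ys zs i]
  unfolding lhbs_B_def children_atMost_eq by blast

lemma children_subset_lhbs_B:
  "(\<Union>j\<le>i. children V (ys ! j)) \<subseteq> lhbs_B V ys zs i \<union> (!) zs ` {..<i}"
  using children_subset_lhbs_Bprime[of V ys i zs]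
  unfolding lhbs_B_def children_atMost_eq by blast

lemma lhbs_step_parent:
  assumes "lhbs_step V p ys zs" and "i < length ys"
  obtains j y where "j \<le> i" and "y \<in> V" and "zs ! i = ys ! j @ [y]"
proof -
  have "zs ! i \<in> lhbs_B V ys zs i"
    using assms unfolding lhbs_step_def by blast
  then obtain j where "j \<le> i" and "zs ! i \<in> children V (ys ! j)"
    using lhbs_B_subset_children by blast
  then show thesis
    using that unfolding children_def by blast
qed

lemma lhbs_step_rank:
  assumes "lhbs_step V p ys zs" and "i < length ys"
  shows "card {c \<in> (\<Union>j\<le>i. children V (ys ! j)). ln (p c) > ln (p (zs ! i))} \<le> i"
proof -
  have maximal: "ln (p c) \<le> ln (p (zs ! i))" if "c \<in> lhbs_B V ys zs i" for c
    using assms that unfolding lhbs_step_def by blast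
  have "{c \<in> (\<Union>j\<le>i. children V (ys ! j)). ln (p c) > ln (p (zs ! i))} \<subseteq> (!) zs ` {..<i}"
  proof
    fix c
    assume "c \<in> {c \<in> (\<Union>j\<le>i. children V (ys ! j)). ln (p c) > ln (p (zs ! i))}"
    then have "c \<in> lhbs_B V ys zs i \<union> (!) zs ` {..<i}" and "c \<notin> lhbs_B V ys zs i"
      using children_subset_lhbs_B[of V ys i zs] maximal by force+
    then show "c \<in> (!) zs ` {..<i}"
      by blast
  qed
  then have "card {c \<in> (\<Union>j\<le>i. children V (ys ! j)). ln (p c) > ln (p (zs ! i))}
      \<le> card ((!) zs ` {..<i})"
    by (intro card_mono) auto
  also have "\<dots> \<le> i"
    using card_image_le[of "{..<i}" "(!) zs"] by simp
  finally show ?thesis .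
qed

theorem proposition2:
  fixes V :: "'a set" and p :: "'a list \<Rightarrow> real" and k :: nat
    and ys zs :: "'a list list"
  assumes "finite V"
    and "\<forall>y. p y > 0"
    and "k \<ge> 1"
    and "length ys = k" and "distinct ys"
    and "sorted_wrt (\<lambda>a b. p a \<ge> p b) ys"
    and "lhbs_step V p ys zs"
  shows "\<forall>i < k. \<exists>y' y. zs ! i = y' @ [y] \<and> y' \<in> set ys \<and> y \<in> V \<and>
           (\<exists>j \<le> i. y' = ys ! j) \<and>
           card {c \<in> (\<Union>j \<in> {..i}. children V (ys ! j)).
                   ln (p c) > ln (p (zs ! i))} \<le> i"
proof (intro allI impI)
  fix i
  assume "i < k"
  then have i: "i < length ys"
    using \<open>length ys = k\<close> by simp
  obtain j y where "j \<le> i" "y \<in> V" "zs ! i = ys ! j @ [y]"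
    using lhbs_step_parent[OF \<open>lhbs_step V p ys zs\<close> i] .
  moreover have "ys ! j \<in> set ys"
    using \<open>j \<le> i\<close> i by simp
  ultimately show "\<exists>y' y. zs ! i = y' @ [y] \<and> y' \<in> set ys \<and> y \<in> V \<and>
           (\<exists>j \<le> i. y' = ys ! j) \<and>
           card {c \<in> (\<Union>j \<in> {..i}. children V (ys ! j)).
                   ln (p c) > ln (p (zs ! i))} \<le> i"
    using lhbs_step_rank[OF \<open>lhbs_step V p ys zs\<close> i] by blast
qed

end
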